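(* Let $p=1-\sqrt{0.5}$, $d=\log_2\log_2 t$, and $$N=\frac{d+4}{d}\,\log_2 t\,\frac{1}{h(p)-p}.$$ Let $X$ be a random binary $N\times t$ matrix whose columns are chosen independently and uniformly from the set of all binary columns of length $N$ with exactly $\lfloor pN\rfloor$ ones. Then the probability that $X$ is 2-good tends to $1$ as $t\to\infty$.
   Context: $h(x)=-x\log_2 x-(1-x)\log_2(1-x)$ is the binary entropy function. For a binary $N\times t$ matrix $X$ with columns $x(1),\dots,x(t)$ and a set $S\subseteq[t]$, let $r(X,S)=\bigvee_{j\in S}x(j)$ be the coordinatewise Boolean OR of the columns indexed by $S$. For $\mathbf{y}\in\{0,1\}^N$, $H(X,2,\mathbf{y})$ is the graph with vertex set $[t]$ whose edges are all $2$-element sets $S\subseteq[t]$ with $r(X,S)=\mathbf{y}$. The matrix $X$ is called 2-good (with respect to the parameter $p$ above) if: (1) for every $\mathbf{y}\in\{0,1\}^N$, the maximal vertex degree in $H(X,2,\mathbf{y})$ is less than $d=\log_2\log_2 t$; and (2) for every $\mathbf{y}\in\{0,1\}^N$ of weight $|\mathbf{y}|=w$, the maximal size of a matching (set of pairwise disjoint edges) in $H(X,2,\mathbf{y})$ is less than $10\max(N,t^2q)$, where $$q=\frac{\binom{w}{\lfloor pN\rfloor}\binom{\lfloor pN\rfloor}{w-\lfloor pN\rfloor}}{\binom{N}{\lfloor pN\rfloor}^2}.$$ *)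

theory Defs
  imports "HOL-Probability.Probability"
begin

(* Binary vectors in {0,1}^N are represented by their supports, i.e. subsets of {..<N}.
   A binary N x t matrix X is a function from column indices {..<t} to supports of columns. *)

definition hbin :: "real \<Rightarrow> real" where
  "hbin x = - x * log 2 x - (1 - x) * log 2 (1 - x)"

definition p0 :: real where
  "p0 = 1 - sqrt 0.5"

definition dpar :: "nat \<Rightarrow> real" where
  "dpar t = log 2 (log 2 (real t))"

definition Npar :: "nat \<Rightarrow> nat" where
  "Npar t = nat \<lceil>(dpar t + 4) / dpar t * log 2 (real t) * (1 / (hbin p0 - p0))\<rceil>"

definition rOR :: "(nat \<Rightarrow> nat set) \<Rightarrow> nat set \<Rightarrow> nat set" where
  "rOR X S = \<Union> (X ` S)"

definition edgesH :: "(nat \<Rightarrow> nat set) \<Rightarrow> nat \<Rightarrow> nat set \<Rightarrow> nat set set" where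
  "edgesH X t y = {S. S \<subseteq> {..<t} \<and> card S = 2 \<and> rOR X S = y}"

definition degH :: "(nat \<Rightarrow> nat set) \<Rightarrow> nat \<Rightarrow> nat set \<Rightarrow> nat \<Rightarrow> nat" where
  "degH X t y v = card {e \<in> edgesH X t y. v \<in> e}"

definition is_matching :: "nat set set \<Rightarrow> nat set set \<Rightarrow> bool" where
  "is_matching E M \<longleftrightarrow> M \<subseteq> E \<and> (\<forall>e\<in>M. \<forall>e'\<in>M. e \<noteq> e' \<longrightarrow> e \<inter> e' = {})"

definition qpar :: "nat \<Rightarrow> real \<Rightarrow> nat \<Rightarrow> real" where
  "qpar N p w = (let k = nat \<lfloor>p * real N\<rfloor> in
     real (w choose k) * real (k choose (w - k)) / (real (N choose k))^2)"

definition two_good :: "real \<Rightarrow> nat \<Rightarrow> nat \<Rightarrow> (nat \<Rightarrow> nat set) \<Rightarrow> bool" where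
  "two_good p N t X \<longleftrightarrow>
     (\<forall>y. y \<subseteq> {..<N} \<longrightarrow> (\<forall>v<t. real (degH X t y v) < log 2 (log 2 (real t)))) \<and>
     (\<forall>y M. y \<subseteq> {..<N} \<longrightarrow> is_matching (edgesH X t y) M \<longrightarrow>
        real (card M) < 10 * max (real N) (real t ^ 2 * qpar N p (card y)))"

definition col_pmf :: "nat \<Rightarrow> nat \<Rightarrow> nat set pmf" where
  "col_pmf N k = pmf_of_set {S. S \<subseteq> {..<N} \<and> card S = k}"

definition rand_matrix :: "real \<Rightarrow> nat \<Rightarrow> nat \<Rightarrow> (nat \<Rightarrow> nat set) pmf" where
  "rand_matrix p N t = Pi_pmf {..<t} {} (\<lambda>_. col_pmf N (nat \<lfloor>p * real N\<rfloor>))"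

end

theory Submission
  imports Defs "HOL-Real_Asymp.Real_Asymp"
begin

(* Let k = floor (p N) and C = N choose k.  A matrix that is not 2-good has either
   (a) a column v and D = ceiling d other columns u all giving the same x(v) OR x(u), or
   (b) a vector y and a matching of size m >= 10 max(N, t^2 q) in H(X,2,y).
   In case (a) fix v, one such u and the D - 1 remaining columns w: given the columns v and u,
   each x(w) is one of the at most 2^k sets B with x(v) OR B = x(v) OR x(u), so
   P(a) <= t^(D+1) (2^k / C)^(D-1).  In case (b), given one endpoint of every edge of a fixed
   matching, the edges produce y independently, each with probability at most q; as there are
   at most (t^2)^m / m! matchings of size m, P(b) <= 2^N (e/10)^(10 N) <= 2^(-N).
   Since the binomial distribution B(N, p) has mass at least 1 / (2 (N + 1)) at k, the choice of N
   gives 2^k / C <= 4 (N + 1) 2^(-N (h(p) - p)) <= 24 log t * t^(-(1 + 4/d)), hence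
   P(a) <= (24 log t)^d / t and P(b) <= t^(-1/2). *)

definition ksubsets :: "nat \<Rightarrow> nat \<Rightarrow> nat set set" where
  "ksubsets N k = {S. S \<subseteq> {..<N} \<and> card S = k}"

lemma finite_ksubsets [simp]: "finite (ksubsets N k)"
  unfolding ksubsets_def by (rule finite_subset[of _ "Pow {..<N}"]) auto

lemma card_ksubsets [simp]: "card (ksubsets N k) = N choose k"
  unfolding ksubsets_def using n_subsets[of "{..<N}" k] by simp

lemma ksubsets_nonempty: "k \<le> N \<Longrightarrow> ksubsets N k \<noteq> {}"
  using card_ksubsets[of N k] by (metis card.empty zero_less_binomial_iff less_irrefl)

lemma mem_ksubsetsD: "A \<in> ksubsets N k \<Longrightarrow> finite A \<and> card A = k"
  unfolding ksubsets_def using finite_subset[OF _ finite_lessThan] by blast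

lemma rand_matrix_eq_Pi_pmf:
  "rand_matrix p N t = Pi_pmf {..<t} {} (\<lambda>_. pmf_of_set (ksubsets N (nat \<lfloor>p * real N\<rfloor>)))"
  unfolding rand_matrix_def col_pmf_def ksubsets_def ..

lemma choose_le_pow: "n choose k \<le> n ^ k"
  by (rule order_trans[OF _ binomial_fact_pow]) simp

lemma nat_floor_mult_le:
  fixes p :: real
  assumes "0 \<le> p" "p \<le> 1"
  shows "nat \<lfloor>p * real N\<rfloor> \<le> N"
proof -
  have "p * real N \<le> real N"
    using assms by (simp add: mult_left_le_one_le)
  then show ?thesis
    by linarith
qed

lemma less_nat_floor_add_one:
  fixes x :: real
  assumes "0 \<le> x"
  shows "x < real (nat \<lfloor>x\<rfloor>) + 1"
proof -
  have "real (nat \<lfloor>x\<rfloor>) = of_int \<lfloor>x\<rfloor>"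
    using assms by simp
  then show ?thesis
    using real_of_int_floor_add_one_gt[of x] by simp
qed

section \<open>Pairs of \<open>k\<close>-sets with a given union\<close>

lemma union_eq_imp_eq_Diff: "A \<union> B = y \<Longrightarrow> B = y - (A - B)"
  by blast

lemma card_union_eq_le_pow:
  assumes "finite A"
  shows "card {B \<in> F. A \<union> B = y} \<le> 2 ^ card A"
proof -
  have "inj_on (\<lambda>B. A - B) {B \<in> F. A \<union> B = y}"
    by (rule inj_onI) (metis (mono_tags, lifting) mem_Collect_eq union_eq_imp_eq_Diff)
  then have "card {B \<in> F. A \<union> B = y} \<le> card (Pow A)"
    using assms by (intro card_inj_on_le) auto
  then show ?thesis
    using assms by (simp add: card_Pow)
qed

lemma card_union_eq_le_choose:
  assumes "finite y" "A \<subseteq> y" "card A = k"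
  shows "card {B. card B = k \<and> A \<union> B = y} \<le> k choose (card y - k)"
proof -
  let ?S = "{B. card B = k \<and> A \<union> B = y}"
  have "finite A"
    using assms finite_subset by blast
  have card_Diff: "card (A - B) = card y - k" if B: "card B = k" "A \<union> B = y" for B
  proof -
    have "finite B"
      using B assms(1) finite_subset by blast
    then have "card (B \<union> (A - B)) = card B + card (A - B)"
      using \<open>finite A\<close> by (intro card_Un_disjoint) auto
    moreover have "B \<union> (A - B) = y"
      using B by auto
    ultimately show ?thesis
      using B by simp
  qed
  have "inj_on (\<lambda>B. A - B) ?S"
    by (rule inj_onI) (metis (mono_tags, lifting) mem_Collect_eq union_eq_imp_eq_Diff)
  moreover have "(\<lambda>B. A - B) ` ?S \<subseteq> {T. T \<subseteq> A \<and> card T = card y - k}"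
    using card_Diff by blast
  ultimately have "card ?S \<le> card {T. T \<subseteq> A \<and> card T = card y - k}"
    using \<open>finite A\<close> by (intro card_inj_on_le) auto
  also have "\<dots> = k choose (card y - k)"
    using \<open>finite A\<close> assms(3) by (simp add: n_subsets)
  finally show ?thesis .
qed

lemma card_pairs_union_eq_le:
  assumes "finite y"
  shows "card {(A, B). card A = k \<and> card B = k \<and> A \<union> B = y}
           \<le> (card y choose k) * (k choose (card y - k))"
proof -
  have "{(A, B). card A = k \<and> card B = k \<and> A \<union> B = y}
      = Sigma {A. A \<subseteq> y \<and> card A = k} (\<lambda>A. {B. card B = k \<and> A \<union> B = y})"
    by blast
  moreover have "finite {B. card B = k \<and> A \<union> B = y}" for A
    by (rule finite_subset[of _ "Pow y"]) (use assms in auto)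
  ultimately have "card {(A, B). card A = k \<and> card B = k \<and> A \<union> B = y}
      = (\<Sum>A | A \<subseteq> y \<and> card A = k. card {B. card B = k \<and> A \<union> B = y})"
    using assms by (simp add: card_SigmaI)
  also have "\<dots> \<le> (\<Sum>A | A \<subseteq> y \<and> card A = k. k choose (card y - k))"
    using assms by (intro sum_mono card_union_eq_le_choose) auto
  also have "\<dots> = (card y choose k) * (k choose (card y - k))"
    using assms by (simp add: n_subsets)
  finally show ?thesis .
qed

lemma pairs_ksubsets_ratio_le_qpar:
  assumes "y \<subseteq> {..<N}" and k: "k = nat \<lfloor>p * real N\<rfloor>"
  shows "real (card {(A, B). A \<in> ksubsets N k \<and> B \<in> ksubsets N k \<and> A \<union> B = y})
           / real (N choose k) ^ 2 \<le> qpar N p (card y)"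
proof -
  have "finite y"
    using assms(1) finite_subset by blast
  have "{(A, B). A \<in> ksubsets N k \<and> B \<in> ksubsets N k \<and> A \<union> B = y}
      \<subseteq> {(A, B). card A = k \<and> card B = k \<and> A \<union> B = y}"
    unfolding ksubsets_def by auto
  moreover have "finite {(A, B). card A = k \<and> card B = k \<and> A \<union> B = y}"
    by (rule finite_subset[of _ "Pow y \<times> Pow y"]) (use \<open>finite y\<close> in auto)
  ultimately have "card {(A, B). A \<in> ksubsets N k \<and> B \<in> ksubsets N k \<and> A \<union> B = y}
      \<le> card {(A, B). card A = k \<and> card B = k \<and> A \<union> B = y}"
    by (intro card_mono)
  also have "\<dots> \<le> (card y choose k) * (k choose (card y - k))"
    using \<open>finite y\<close> by (rule card_pairs_union_eq_le)
  finally have "card {(A, B). A \<in> ksubsets N k \<and> B \<in> ksubsets N k \<and> A \<union> B = y}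
      \<le> (card y choose k) * (k choose (card y - k))" .
  then show ?thesis
    unfolding qpar_def Let_def k[symmetric] by (intro divide_right_mono) (simp_all flip: of_nat_mult)
qed

lemma sum_card_union_eq_card_pairs:
  assumes "finite K"
  shows "(\<Sum>A\<in>K. card {Z \<in> K. A \<union> Z = y}) = card {(A, B). A \<in> K \<and> B \<in> K \<and> A \<union> B = y}"
proof -
  have "{(A, B). A \<in> K \<and> B \<in> K \<and> A \<union> B = y} = Sigma K (\<lambda>A. {Z \<in> K. A \<union> Z = y})"
    by blast
  then show ?thesis
    using assms by (simp add: card_SigmaI)
qed

section \<open>Union bounds and conditioning on some columns\<close>

lemma prob_union_bound:
  assumes "finite T" "E \<subseteq> (\<Union>\<tau>\<in>T. F \<tau>)" "\<And>\<tau>. \<tau> \<in> T \<Longrightarrow> measure_pmf.prob P (F \<tau>) \<le> b"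
  shows "measure_pmf.prob P E \<le> real (card T) * b"
proof -
  have "measure_pmf.prob P E \<le> measure_pmf.prob P (\<Union>\<tau>\<in>T. F \<tau>)"
    using assms(2) by (rule measure_pmf.finite_measure_mono) simp
  also have "\<dots> \<le> (\<Sum>\<tau>\<in>T. measure_pmf.prob P (F \<tau>))"
    using assms(1) by (rule measure_pmf.finite_measure_subadditive_finite) simp
  also have "\<dots> \<le> real (card T) * b"
    using assms(3) by (rule sum_bounded_above)
  finally show ?thesis .
qed

lemma prob_Pi_pmf_of_set_le_sum_prod:
  fixes E :: "('a \<Rightarrow> 'b) set" and B :: "('a \<Rightarrow> 'b) \<Rightarrow> 'a \<Rightarrow> 'b set"
  assumes "finite I" "L \<subseteq> I" "finite K" "K \<noteq> {}"
    and cover: "\<And>X. X \<in> E \<Longrightarrow> (\<And>i. i \<in> I \<Longrightarrow> X i \<in> K) \<Longrightarrow> X \<in> Pi I (B (restrict X L))"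
  shows "measure_pmf.prob (Pi_pmf I d (\<lambda>_. pmf_of_set K)) E
     \<le> (\<Sum>g\<in>PiE L (\<lambda>_. K). \<Prod>i\<in>I. measure_pmf.prob (pmf_of_set K) (B g i))"
proof -
  let ?P = "Pi_pmf I d (\<lambda>_. pmf_of_set K)"
  have "E \<inter> set_pmf ?P \<subseteq> (\<Union>g\<in>PiE L (\<lambda>_. K). Pi I (B g))"
  proof
    fix X assume X: "X \<in> E \<inter> set_pmf ?P"
    then have XK: "X i \<in> K" if "i \<in> I" for i
      using assms that by (auto simp: set_Pi_pmf PiE_dflt_def)
    then have "restrict X L \<in> PiE L (\<lambda>_. K)"
      using \<open>L \<subseteq> I\<close> by auto
    moreover have "X \<in> Pi I (B (restrict X L))"
      using cover X XK by blast
    ultimately show "X \<in> (\<Union>g\<in>PiE L (\<lambda>_. K). Pi I (B g))"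
      by blast
  qed
  then have "measure_pmf.prob ?P E \<le> measure_pmf.prob ?P (\<Union>g\<in>PiE L (\<lambda>_. K). Pi I (B g))"
    by (subst measure_Int_set_pmf[symmetric]) (rule measure_pmf.finite_measure_mono, simp_all)
  also have "\<dots> \<le> (\<Sum>g\<in>PiE L (\<lambda>_. K). measure_pmf.prob ?P (Pi I (B g)))"
    using assms by (intro measure_pmf.finite_measure_subadditive_finite)
      (auto intro!: finite_PiE dest: finite_subset)
  also have "\<dots> = (\<Sum>g\<in>PiE L (\<lambda>_. K). \<Prod>i\<in>I. measure_pmf.prob (pmf_of_set K) (B g i))"
    using assms by (simp add: measure_Pi_pmf_Pi)
  finally show ?thesis .
qed

lemma prob_Pi_pmf_of_set_le_condition:
  fixes E :: "('a \<Rightarrow> 'b) set" and B :: "('a \<Rightarrow> 'b) \<Rightarrow> 'a \<Rightarrow> 'b set"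
  assumes "finite I" "L \<subseteq> I" "finite K" "K \<noteq> {}"
    and cover: "\<And>X i. X \<in> E \<Longrightarrow> (\<And>j. j \<in> I \<Longrightarrow> X j \<in> K) \<Longrightarrow> i \<in> I - L
                  \<Longrightarrow> X i \<in> B (restrict X L) i"
  shows "measure_pmf.prob (Pi_pmf I d (\<lambda>_. pmf_of_set K)) E
     \<le> (\<Sum>g\<in>PiE L (\<lambda>_. K). \<Prod>i\<in>I - L. measure_pmf.prob (pmf_of_set K) (B g i))
         / real (card K) ^ card L"
proof -
  define B' where "B' g i = (if i \<in> L then {g i} else B g i)" for g i
  have "measure_pmf.prob (Pi_pmf I d (\<lambda>_. pmf_of_set K)) E
      \<le> (\<Sum>g\<in>PiE L (\<lambda>_. K). \<Prod>i\<in>I. measure_pmf.prob (pmf_of_set K) (B' g i))"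
    using assms by (intro prob_Pi_pmf_of_set_le_sum_prod) (auto simp: B'_def)
  also have "\<dots> = (\<Sum>g\<in>PiE L (\<lambda>_. K).
      (\<Prod>i\<in>I - L. measure_pmf.prob (pmf_of_set K) (B g i)) * (\<Prod>i\<in>L. 1 / real (card K)))"
  proof (rule sum.cong[OF refl])
    fix g assume "g \<in> PiE L (\<lambda>_. K)"
    then have "(\<Prod>i\<in>L. measure_pmf.prob (pmf_of_set K) (B' g i)) = (\<Prod>i\<in>L. 1 / real (card K))"
      using assms by (intro prod.cong) (auto simp: B'_def measure_pmf_single PiE_iff)
    moreover have "(\<Prod>i\<in>I - L. measure_pmf.prob (pmf_of_set K) (B' g i))
        = (\<Prod>i\<in>I - L. measure_pmf.prob (pmf_of_set K) (B g i))"
      by (simp add: B'_def)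
    ultimately show "(\<Prod>i\<in>I. measure_pmf.prob (pmf_of_set K) (B' g i))
        = (\<Prod>i\<in>I - L. measure_pmf.prob (pmf_of_set K) (B g i)) * (\<Prod>i\<in>L. 1 / real (card K))"
      using assms by (simp add: prod.subset_diff)
  qed
  also have "\<dots> = (\<Sum>g\<in>PiE L (\<lambda>_. K). \<Prod>i\<in>I - L. measure_pmf.prob (pmf_of_set K) (B g i))
                   / real (card K) ^ card L"
    by (simp add: sum_divide_distrib power_one_over)
  finally show ?thesis .
qed

lemma prob_pmf_of_set_union_eq:
  "finite K \<Longrightarrow> K \<noteq> {} \<Longrightarrow>
     measure_pmf.prob (pmf_of_set K) {Z. A \<union> Z = y} = real (card {Z \<in> K. A \<union> Z = y}) / real (card K)"
  by (simp add: measure_pmf_of_set Int_def)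

section \<open>High degrees\<close>

lemma rOR_doubleton [simp]: "rOR X {a, b} = X a \<union> X b"
  unfolding rOR_def by auto

lemma degH_eq_card_neighbours:
  assumes "v < t"
  shows "degH X t y v = card {u. u < t \<and> u \<noteq> v \<and> X v \<union> X u = y}"
proof -
  let ?nbrs = "{u. u < t \<and> u \<noteq> v \<and> X v \<union> X u = y}"
  have "{e \<in> edgesH X t y. v \<in> e} = (\<lambda>u. {v, u}) ` ?nbrs"
  proof safe
    fix e assume e: "e \<in> edgesH X t y" "v \<in> e"
    then obtain u where "e = {v, u}" "u \<noteq> v"
      unfolding edgesH_def by (auto simp: card_2_iff doubleton_eq_iff)
    with e show "e \<in> (\<lambda>u. {v, u}) ` ?nbrs"
      unfolding edgesH_def by auto
  qed (use assms in \<open>auto simp: edgesH_def\<close>)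
  moreover have "inj_on (\<lambda>u. {v, u}) ?nbrs"
    by (auto simp: inj_on_def doubleton_eq_iff)
  ultimately show ?thesis
    unfolding degH_def by (simp add: card_image)
qed

lemma prob_common_union_le:
  fixes K :: "'b set set"
  assumes "finite I" "finite K" "K \<noteq> {}" and card_K: "\<And>A. A \<in> K \<Longrightarrow> finite A \<and> card A \<le> k"
    and "v \<in> I" "u \<in> I" "u \<noteq> v" "U \<subseteq> I" "v \<notin> U" "u \<notin> U"
  shows "measure_pmf.prob (Pi_pmf I d (\<lambda>_. pmf_of_set K)) {X. \<forall>w\<in>U. X v \<union> X w = X v \<union> X u}
     \<le> (2 ^ k / real (card K)) ^ card U"
proof -
  define C where "C = real (card K)"
  define B where "B g w = (if w \<in> U then {Z :: 'b set. g v \<union> Z = g v \<union> g u} else UNIV)" for g w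
  have "C > 0"
    using assms by (simp add: C_def card_gt_0_iff)
  have "measure_pmf.prob (Pi_pmf I d (\<lambda>_. pmf_of_set K)) {X. \<forall>w\<in>U. X v \<union> X w = X v \<union> X u}
      \<le> (\<Sum>g\<in>PiE {v, u} (\<lambda>_. K). \<Prod>w\<in>I - {v, u}. measure_pmf.prob (pmf_of_set K) (B g w))
          / C ^ card {v, u}"
    unfolding C_def by (rule prob_Pi_pmf_of_set_le_condition) (use assms in \<open>auto simp: B_def\<close>)
  also have "\<dots> \<le> (\<Sum>g\<in>PiE {v, u} (\<lambda>_. K). (2 ^ k / C) ^ card U) / C ^ card {v, u}"
  proof (intro divide_right_mono sum_mono)
    fix g assume g: "g \<in> PiE {v, u} (\<lambda>_. K)"
    then have "finite (g v)" "card (g v) \<le> k"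
      using card_K by auto
    then have "card {Z \<in> K. g v \<union> Z = g v \<union> g u} \<le> 2 ^ card (g v)"
      by (intro card_union_eq_le_pow)
    also have "\<dots> \<le> 2 ^ k"
      using \<open>card (g v) \<le> k\<close> by (rule power_increasing) simp
    finally have "real (card {Z \<in> K. g v \<union> Z = g v \<union> g u}) \<le> 2 ^ k"
      by (metis of_nat_le_iff of_nat_numeral of_nat_power)
    then have prob_le: "measure_pmf.prob (pmf_of_set K) {Z. g v \<union> Z = g v \<union> g u} \<le> 2 ^ k / C"
      using assms \<open>C > 0\<close> by (simp add: prob_pmf_of_set_union_eq divide_right_mono flip: C_def)
    have "(\<Prod>w\<in>I - {v, u}. measure_pmf.prob (pmf_of_set K) (B g w))
        = (\<Prod>w\<in>U. measure_pmf.prob (pmf_of_set K) {Z. g v \<union> Z = g v \<union> g u})"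
      using assms by (intro prod.mono_neutral_cong_right) (auto simp: B_def)
    also have "\<dots> \<le> (2 ^ k / C) ^ card U"
      using prob_le by (simp add: power_mono)
    finally show "(\<Prod>w\<in>I - {v, u}. measure_pmf.prob (pmf_of_set K) (B g w)) \<le> (2 ^ k / C) ^ card U" .
  qed (use \<open>C > 0\<close> in simp)
  also have "\<dots> = (2 ^ k / C) ^ card U"
    using \<open>C > 0\<close> \<open>u \<noteq> v\<close> by (simp add: card_PiE C_def power2_eq_square)
  finally show ?thesis
    unfolding C_def .
qed

lemma high_degree_imp_common_union:
  assumes "v < t" "D \<le> degH X t y v" "1 \<le> D"
  obtains u U where "u < t" "u \<noteq> v" "U \<subseteq> {..<t} - {u, v}" "card U = D - 1"
    "\<forall>w\<in>U. X v \<union> X w = X v \<union> X u"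
proof -
  define nbrs where "nbrs = {u. u < t \<and> u \<noteq> v \<and> X v \<union> X u = y}"
  have "finite nbrs" "D \<le> card nbrs"
    using assms by (simp_all add: nbrs_def degH_eq_card_neighbours)
  then obtain u where u: "u \<in> nbrs"
    using \<open>1 \<le> D\<close> by fastforce
  then have "D - 1 \<le> card (nbrs - {u})"
    using \<open>finite nbrs\<close> \<open>D \<le> card nbrs\<close> by simp
  then obtain U where "U \<subseteq> nbrs - {u}" "card U = D - 1"
    by (rule obtain_subset_with_card_n)
  with u show thesis
    by (intro that[of u U]) (auto simp: nbrs_def)
qed

lemma card_triples_le:
  assumes "1 \<le> D"
  shows "card {(v, u, U). v < t \<and> u < t \<and> U \<subseteq> {..<t} \<and> card U = D - 1} \<le> t ^ (D + 1)"
proof -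
  have "{(v, u, U). v < t \<and> u < t \<and> U \<subseteq> {..<t} \<and> card U = D - 1}
      = {..<t} \<times> {..<t} \<times> {U. U \<subseteq> {..<t} \<and> card U = D - 1}"
    by auto
  moreover have "card {U. U \<subseteq> {..<t} \<and> card U = D - 1} = t choose (D - 1)"
    using n_subsets[of "{..<t}" "D - 1"] by simp
  ultimately have "card {(v, u, U). v < t \<and> u < t \<and> U \<subseteq> {..<t} \<and> card U = D - 1}
      = t * t * (t choose (D - 1))"
    by (simp add: card_cartesian_product)
  also have "\<dots> \<le> t * t * t ^ (D - 1)"
    by (simp add: choose_le_pow)
  also have "\<dots> = t ^ (D + 1)"
    using \<open>1 \<le> D\<close> by (cases D) (auto simp: mult.assoc)
  finally show ?thesis .
qed

lemma prob_high_degree_le: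
  fixes K :: "nat set set"
  assumes "finite K" "K \<noteq> {}" "\<And>A. A \<in> K \<Longrightarrow> finite A \<and> card A \<le> k" "1 \<le> D"
  shows "measure_pmf.prob (Pi_pmf {..<t} d (\<lambda>_. pmf_of_set K)) {X. \<exists>y. \<exists>v<t. D \<le> degH X t y v}
     \<le> real t ^ (D + 1) * (2 ^ k / real (card K)) ^ (D - 1)"
proof -
  let ?P = "Pi_pmf {..<t} d (\<lambda>_. pmf_of_set K)"
  let ?r = "2 ^ k / real (card K)"
  define T where "T = {(v, u, U). v < t \<and> u < t \<and> U \<subseteq> {..<t} \<and> card U = D - 1 \<and>
                               u \<noteq> v \<and> v \<notin> U \<and> u \<notin> U}"
  define Ev where "Ev = (\<lambda>(v, u, U). {X :: nat \<Rightarrow> nat set. \<forall>w\<in>U. X v \<union> X w = X v \<union> X u})"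
  have T_sub: "T \<subseteq> {(v, u, U). v < t \<and> u < t \<and> U \<subseteq> {..<t} \<and> card U = D - 1}"
    unfolding T_def by auto
  moreover have "finite {(v, u, U). v < t \<and> u < t \<and> U \<subseteq> {..<t} \<and> card U = D - 1}"
    by (rule finite_subset[of _ "{..<t} \<times> {..<t} \<times> Pow {..<t}"]) auto
  ultimately have "finite T"
    by (rule finite_subset)
  have "{X. \<exists>y. \<exists>v<t. D \<le> degH X t y v} \<subseteq> (\<Union>\<tau>\<in>T. Ev \<tau>)"
  proof clarify
    fix X y v assume "v < t" "D \<le> degH X t y v"
    then obtain u U where "u < t" "u \<noteq> v" "U \<subseteq> {..<t} - {u, v}" "card U = D - 1"
        "\<forall>w\<in>U. X v \<union> X w = X v \<union> X u"
      using \<open>1 \<le> D\<close> by (rule high_degree_imp_common_union)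
    with \<open>v < t\<close> have "(v, u, U) \<in> T" "X \<in> Ev (v, u, U)"
      unfolding T_def Ev_def by auto
    then show "X \<in> (\<Union>\<tau>\<in>T. Ev \<tau>)"
      by blast
  qed
  then have "measure_pmf.prob ?P {X. \<exists>y. \<exists>v<t. D \<le> degH X t y v} \<le> real (card T) * ?r ^ (D - 1)"
  proof (rule prob_union_bound[OF \<open>finite T\<close>])
    fix \<tau> assume "\<tau> \<in> T"
    then obtain v u U where "\<tau> = (v, u, U)" "v < t" "u < t" "U \<subseteq> {..<t}" "card U = D - 1"
        "u \<noteq> v" "v \<notin> U" "u \<notin> U"
      unfolding T_def by auto
    then show "measure_pmf.prob ?P (Ev \<tau>) \<le> ?r ^ (D - 1)"
      using prob_common_union_le[of "{..<t}" K k v u U d] assms by (simp add: Ev_def)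
  qed
  also have "\<dots> \<le> real t ^ (D + 1) * ?r ^ (D - 1)"
  proof (rule mult_right_mono)
    have "card T \<le> t ^ (D + 1)"
      using card_mono[OF _ T_sub] card_triples_le[OF \<open>1 \<le> D\<close>, of t] by (fastforce intro: le_trans)
    then show "real (card T) \<le> real t ^ (D + 1)"
      by (metis of_nat_le_iff of_nat_power)
  qed simp
  finally show ?thesis .
qed

section \<open>Large matchings\<close>

lemma card_two_eq_Min_Max:
  fixes e :: "'a :: linorder set"
  assumes "card e = 2"
  shows "e = {Min e, Max e}" "Min e < Max e"
proof -
  obtain a b where "e = {a, b}" "a \<noteq> b"
    using assms by (auto simp: card_2_iff)
  then show "e = {Min e, Max e}" "Min e < Max e"
    by (auto simp: min_def max_def)
qed

lemma rOR_card_two: "card e = 2 \<Longrightarrow> rOR X e = X (Min e) \<union> X (Max e)"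
  using arg_cong[OF card_two_eq_Min_Max(1), of e "rOR X"] by simp

lemma pairwise_disjnt_card_two_Min_Max:
  fixes M :: "'a :: linorder set set"
  assumes "\<And>e. e \<in> M \<Longrightarrow> card e = 2" "pairwise disjnt M"
  shows "inj_on Min M" "inj_on Max M" "Min ` M \<inter> Max ` M = {}"
proof -
  have "finite e" "e \<noteq> {}" if "e \<in> M" for e
    using assms(1)[OF that] by (auto intro: card_ge_0_finite)
  then have Min_in: "Min e \<in> e" and Max_in: "Max e \<in> e" if "e \<in> M" for e
    using that by simp_all
  have same_edge: "e = e'" if "e \<in> M" "e' \<in> M" "x \<in> e" "x \<in> e'" for e e' x
    using assms(2) that unfolding pairwise_def disjnt_def by blast
  show "inj_on Min M"
    by (rule inj_onI) (metis Min_in same_edge)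
  show "inj_on Max M"
    by (rule inj_onI) (metis Max_in same_edge)
  have "Min e \<noteq> Max e'" if "e \<in> M" "e' \<in> M" for e e'
    using card_two_eq_Min_Max(2) assms(1) Min_in Max_in same_edge that by (metis order_less_irrefl)
  then show "Min ` M \<inter> Max ` M = {}"
    by blast
qed

lemma prob_matching_edges_le:
  fixes M K :: "nat set set"
  assumes "finite I" "finite K" "K \<noteq> {}"
    and edges: "\<And>e. e \<in> M \<Longrightarrow> e \<subseteq> I \<and> card e = 2" and "pairwise disjnt M"
  shows "measure_pmf.prob (Pi_pmf I d (\<lambda>_. pmf_of_set K)) {X. \<forall>e\<in>M. rOR X e = y}
     \<le> (real (card {(A, B). A \<in> K \<and> B \<in> K \<and> A \<union> B = y}) / real (card K) ^ 2) ^ card M"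
proof -
  define C where "C = real (card K)"
  define L where "L = Min ` M"
  define \<phi> where "\<phi> A = real (card {Z \<in> K. A \<union> Z = y}) / C" for A
  define B where "B g i = {Z. \<forall>e\<in>M. Max e = i \<longrightarrow> g (Min e) \<union> Z = y}" for g i
  \<comment> \<open>Condition on the columns at the minima of the edges; the maxima are then pairwise distinct
      free columns, one for each edge.\<close>
  have "finite M"
    by (rule finite_subset[of M "Pow I"]) (use edges \<open>finite I\<close> in auto)
  have inj_Min: "inj_on Min M" and inj_Max: "inj_on Max M" and "L \<inter> Max ` M = {}"
    using pairwise_disjnt_card_two_Min_Max[of M] edges \<open>pairwise disjnt M\<close> by (simp_all add: L_def)
  moreover have "Max ` M \<subseteq> I" "L \<subseteq> I"
    using edges card_two_eq_Min_Max(1) unfolding L_def by (metis image_subsetI insert_subset)+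
  ultimately have "Max ` M \<subseteq> I - L"
    by blast
  have "measure_pmf.prob (Pi_pmf I d (\<lambda>_. pmf_of_set K)) {X. \<forall>e\<in>M. rOR X e = y}
      \<le> (\<Sum>g\<in>PiE L (\<lambda>_. K). \<Prod>i\<in>I - L. measure_pmf.prob (pmf_of_set K) (B g i)) / C ^ card L"
    unfolding C_def
  proof (rule prob_Pi_pmf_of_set_le_condition)
    fix X i assume X: "X \<in> {X. \<forall>e\<in>M. rOR X e = y}"
    have "X (Min e) \<union> X (Max e) = y" if "e \<in> M" for e
      using X that rOR_card_two[of e X] edges[OF that] by simp
    then show "X i \<in> B (restrict X L) i"
      by (auto simp: B_def L_def)
  qed (use assms \<open>L \<subseteq> I\<close> in auto)
  also have "(\<Sum>g\<in>PiE L (\<lambda>_. K). \<Prod>i\<in>I - L. measure_pmf.prob (pmf_of_set K) (B g i))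
      = (\<Sum>g\<in>PiE L (\<lambda>_. K). \<Prod>a\<in>L. \<phi> (g a))"
  proof (rule sum.cong[OF refl])
    fix g
    have "B g i = UNIV" if "i \<notin> Max ` M" for i
      using that by (auto simp: B_def)
    then have "(\<Prod>i\<in>I - L. measure_pmf.prob (pmf_of_set K) (B g i))
        = (\<Prod>e\<in>M. measure_pmf.prob (pmf_of_set K) (B g (Max e)))"
      using \<open>Max ` M \<subseteq> I - L\<close> \<open>finite I\<close> inj_Max
      by (subst prod.mono_neutral_right[of "I - L" "Max ` M"]) (auto simp: prod.reindex)
    also have "\<dots> = (\<Prod>e\<in>M. \<phi> (g (Min e)))"
    proof (rule prod.cong[OF refl])
      fix e assume "e \<in> M"
      then have "B g (Max e) = {Z. g (Min e) \<union> Z = y}"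
        using inj_Max by (auto simp: B_def dest: inj_onD)
      then show "measure_pmf.prob (pmf_of_set K) (B g (Max e)) = \<phi> (g (Min e))"
        using assms by (simp add: \<phi>_def C_def prob_pmf_of_set_union_eq)
    qed
    finally show "(\<Prod>i\<in>I - L. measure_pmf.prob (pmf_of_set K) (B g i)) = (\<Prod>a\<in>L. \<phi> (g a))"
      unfolding L_def using inj_Min by (simp add: prod.reindex)
  qed
  also have "\<dots> = (\<Prod>a\<in>L. \<Sum>A\<in>K. \<phi> A)"
    using \<open>finite K\<close> \<open>finite M\<close> by (intro prod_sum_PiE[symmetric]) (auto simp: L_def)
  also have "\<dots> = (\<Sum>A\<in>K. \<phi> A) ^ card M"
    using inj_Min by (simp add: L_def card_image)
  also have "(\<Sum>A\<in>K. \<phi> A) = real (card {(A, B). A \<in> K \<and> B \<in> K \<and> A \<union> B = y}) / C"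
    using \<open>finite K\<close> by (simp add: \<phi>_def sum_divide_distrib flip: sum_card_union_eq_card_pairs)
  finally show ?thesis
    using inj_Min by (simp add: L_def card_image power_divide power2_eq_square power_mult_distrib
        flip: C_def)
qed

lemma card_sets_of_pairs_mult_fact_le:
  "real (card {M. M \<subseteq> {e. e \<subseteq> {..<t} \<and> card e = 2} \<and> card M = m}) * fact m \<le> (real t ^ 2) ^ m"
proof -
  let ?P2 = "{e. e \<subseteq> {..<t} \<and> card e = 2}"
  have "finite ?P2"
    by (rule finite_subset[of _ "Pow {..<t}"]) auto
  then have "card {M. M \<subseteq> ?P2 \<and> card M = m} * fact m = (card ?P2 choose m) * fact m"
    by (simp add: n_subsets)
  also have "\<dots> \<le> card ?P2 ^ m"
    by (rule binomial_fact_pow)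
  also have "\<dots> \<le> (t ^ 2) ^ m"
    using n_subsets[of "{..<t}" 2] choose_le_pow[of t 2] by (intro power_mono) simp_all
  finally have "real (card {M. M \<subseteq> ?P2 \<and> card M = m} * fact m) \<le> real ((t ^ 2) ^ m)"
    by (simp only: of_nat_le_iff)
  then show ?thesis
    by simp
qed

lemma prob_matching_card_ge_le:
  fixes K :: "nat set set" and y :: "nat set"
  assumes "finite K" "K \<noteq> {}"
  defines "\<rho> \<equiv> real (card {(A, B). A \<in> K \<and> B \<in> K \<and> A \<union> B = y}) / real (card K) ^ 2"
  shows "measure_pmf.prob (Pi_pmf {..<t} d (\<lambda>_. pmf_of_set K))
           {X. \<exists>M. is_matching (edgesH X t y) M \<and> m \<le> card M}
     \<le> (real t ^ 2 * \<rho>) ^ m / fact m"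
proof -
  let ?P = "Pi_pmf {..<t} d (\<lambda>_. pmf_of_set K)"
  define P2 where "P2 = {e. e \<subseteq> {..<t} \<and> card e = 2}"
  define T where "T = {M. M \<subseteq> P2 \<and> card M = m \<and> pairwise disjnt M}"
  have T_sub: "T \<subseteq> {M. M \<subseteq> P2 \<and> card M = m}"
    unfolding T_def by auto
  moreover have fin: "finite {M. M \<subseteq> P2 \<and> card M = m}"
    by (rule finite_subset[of _ "Pow P2"]) (auto simp: P2_def)
  ultimately have "finite T"
    by (rule finite_subset)
  have "real (card T) \<le> real (card {M. M \<subseteq> P2 \<and> card M = m})"
    using card_mono[OF fin T_sub] by simp
  also have "\<dots> \<le> (real t ^ 2) ^ m / fact m"
    using card_sets_of_pairs_mult_fact_le[of t m] by (simp add: P2_def field_simps)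
  finally have card_T: "real (card T) \<le> (real t ^ 2) ^ m / fact m" .
  have "{X. \<exists>M. is_matching (edgesH X t y) M \<and> m \<le> card M} \<subseteq> (\<Union>M\<in>T. {X. \<forall>e\<in>M. rOR X e = y})"
  proof clarify
    fix X M0 assume M0: "is_matching (edgesH X t y) M0" "m \<le> card M0"
    then obtain M where M: "M \<subseteq> M0" "card M = m"
      by (meson obtain_subset_with_card_n)
    moreover have "pairwise disjnt M"
      using M M0 unfolding is_matching_def pairwise_def disjnt_def by blast
    ultimately have "M \<in> T" "X \<in> {X. \<forall>e\<in>M. rOR X e = y}"
      using M0 unfolding T_def P2_def is_matching_def edgesH_def by auto
    then show "X \<in> (\<Union>M\<in>T. {X. \<forall>e\<in>M. rOR X e = y})"
      by blast
  qed
  then have "measure_pmf.prob ?P {X. \<exists>M. is_matching (edgesH X t y) M \<and> m \<le> card M}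
      \<le> real (card T) * \<rho> ^ m"
  proof (rule prob_union_bound[OF \<open>finite T\<close>])
    fix M assume "M \<in> T"
    then show "measure_pmf.prob ?P {X. \<forall>e\<in>M. rOR X e = y} \<le> \<rho> ^ m"
      using prob_matching_edges_le[where I = "{..<t}" and K = K and M = M and y = y and d = d] assms
      unfolding T_def P2_def \<rho>_def by auto
  qed
  also have "\<dots> \<le> (real t ^ 2) ^ m / fact m * \<rho> ^ m"
    using card_T by (rule mult_right_mono) (simp add: \<rho>_def)
  also have "\<dots> = (real t ^ 2 * \<rho>) ^ m / fact m"
    by (simp add: power_mult_distrib)
  finally show ?thesis .
qed

lemma pow_div_fact_le_exp:
  fixes z :: real
  assumes "0 \<le> z"
  shows "z ^ m / fact m \<le> exp z"
proof -
  have exp_sums: "(\<lambda>n. z ^ n / fact n) sums exp z"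
    using exp_converges[of z] by (simp add: divide_inverse mult.commute scaleR_conv_of_real)
  have "(\<Sum>n\<in>{m}. z ^ n / fact n) \<le> (\<Sum>n. z ^ n / fact n)"
    using exp_sums assms by (intro sum_le_suminf) (auto simp: sums_iff)
  then show ?thesis
    using exp_sums by (simp add: sums_iff)
qed

lemma pow_div_fact_le_exp_div_pow:
  fixes x c :: real
  assumes "0 \<le> x" "0 < c" "c * x \<le> real m"
  shows "x ^ m / fact m \<le> (exp 1 / c) ^ m"
proof -
  have "x ^ m / fact m \<le> (real m / c) ^ m / fact m"
    using assms by (intro divide_right_mono power_mono) (simp_all add: field_simps)
  also have "\<dots> = (real m ^ m / fact m) / c ^ m"
    by (simp add: power_divide)
  also have "\<dots> \<le> exp (real m) / c ^ m"
    using assms by (intro divide_right_mono pow_div_fact_le_exp) simp_all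
  also have "\<dots> = (exp 1 / c) ^ m"
    by (simp add: power_divide flip: exp_of_nat_mult)
  finally show ?thesis .
qed

lemma two_mult_exp_div_ten_pow_le: "2 * (exp 1 / 10) ^ 10 \<le> (1 / 2 :: real)"
proof -
  have "(exp 1 / 10) ^ 10 \<le> (3 / 10 :: real) ^ 10"
    using exp_le by (intro power_mono) simp_all
  also have "\<dots> \<le> 1 / 4"
    by (simp add: power_divide)
  finally show ?thesis
    by simp
qed

lemma prob_large_matching_le:
  fixes p :: real
  assumes "0 \<le> p" "p \<le> 1" "1 \<le> N"
  shows "measure_pmf.prob (rand_matrix p N t)
           {X. \<exists>y M. y \<subseteq> {..<N} \<and> is_matching (edgesH X t y) M \<and>
                 \<not> real (card M) < 10 * max (real N) (real t ^ 2 * qpar N p (card y))}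
     \<le> (1 / 2) ^ N"
proof -
  define k where "k = nat \<lfloor>p * real N\<rfloor>"
  define K where "K = ksubsets N k"
  let ?P = "Pi_pmf {..<t} {} (\<lambda>_. pmf_of_set K)"
  define m where "m y = nat \<lceil>10 * max (real N) (real t ^ 2 * qpar N p (card y))\<rceil>" for y :: "nat set"
  define Ev where "Ev y = {X. \<exists>M. is_matching (edgesH X t y) M \<and> m y \<le> card M}" for y
  have "k \<le> N"
    unfolding k_def using assms(1,2) by (rule nat_floor_mult_le)
  then have K: "finite K" "K \<noteq> {}" "card K = N choose k"
    unfolding K_def by (simp_all add: ksubsets_nonempty)
  have "finite (Pow {..<N})"
    by simp
  have "{X. \<exists>y M. y \<subseteq> {..<N} \<and> is_matching (edgesH X t y) M \<and>
                 \<not> real (card M) < 10 * max (real N) (real t ^ 2 * qpar N p (card y))}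
      \<subseteq> (\<Union>y\<in>Pow {..<N}. Ev y)"
    unfolding Ev_def m_def by (force simp: nat_ceiling_le_eq)
  then have "measure_pmf.prob ?P
           {X. \<exists>y M. y \<subseteq> {..<N} \<and> is_matching (edgesH X t y) M \<and>
                 \<not> real (card M) < 10 * max (real N) (real t ^ 2 * qpar N p (card y))}
      \<le> real (card (Pow {..<N})) * (exp 1 / 10) ^ (10 * N)"
  proof (rule prob_union_bound[OF \<open>finite (Pow {..<N})\<close>])
    fix y assume "y \<in> Pow {..<N}"
    define q where "q = qpar N p (card y)"
    have "0 \<le> q"
      unfolding q_def qpar_def Let_def by simp
    have m_ge: "10 * real N \<le> real (m y)" "10 * (real t ^ 2 * q) \<le> real (m y)"
      unfolding m_def q_def by linarith+
    have "measure_pmf.prob ?P (Ev y)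
        \<le> (real t ^ 2 * (real (card {(A, B). A \<in> K \<and> B \<in> K \<and> A \<union> B = y}) / real (card K) ^ 2))
             ^ m y / fact (m y)"
      unfolding Ev_def using K(1,2) by (rule prob_matching_card_ge_le)
    also have "\<dots> \<le> (real t ^ 2 * q) ^ m y / fact (m y)"
      using pairs_ksubsets_ratio_le_qpar[of y N k p] \<open>y \<in> Pow {..<N}\<close> K
      by (intro divide_right_mono power_mono mult_left_mono) (simp_all add: K_def k_def q_def)
    also have "\<dots> \<le> (exp 1 / 10) ^ m y"
      using \<open>0 \<le> q\<close> m_ge by (intro pow_div_fact_le_exp_div_pow) simp_all
    also have "\<dots> \<le> (exp 1 / 10) ^ (10 * N)"
      using m_ge exp_le by (intro power_decreasing) simp_all
    finally show "measure_pmf.prob ?P (Ev y) \<le> (exp 1 / 10) ^ (10 * N)" .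
  qed
  also have "\<dots> = (2 * (exp 1 / 10) ^ 10) ^ N"
    by (simp add: card_Pow power_mult power_mult_distrib)
  also have "\<dots> \<le> (1 / 2) ^ N"
    using two_mult_exp_div_ten_pow_le by (rule power_mono) simp
  finally show ?thesis
    unfolding rand_matrix_eq_Pi_pmf K_def k_def .
qed

section \<open>The binomial distribution and the entropy bound\<close>

lemma pmf_binomial_Suc:
  assumes "0 \<le> p" "p \<le> 1"
  shows "pmf (binomial_pmf N p) (Suc j) * (real (Suc j) * (1 - p))
           = pmf (binomial_pmf N p) j * (real (N - j) * p)"
proof (cases "j < N")
  case True
  have "Suc j * (N choose Suc j) = (N - j) * (N choose j)"
    using binomial_absorption[of j N] binomial_absorb_comp[of N j] by simp
  then have "real (Suc j) * real (N choose Suc j) = real (N - j) * real (N choose j)"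
    by (simp only: of_nat_mult [symmetric])
  moreover have "(1 - p) ^ (N - j) = (1 - p) ^ (N - Suc j) * (1 - p)"
    using True by (simp flip: power_Suc2 add: Suc_diff_Suc)
  ultimately show ?thesis
    using assms by (simp add: ac_simps)
next
  case False
  then show ?thesis
    using assms by simp
qed

lemma pmf_binomial_le_Suc:
  assumes "0 \<le> p" "p < 1" "real (Suc j) * (1 - p) \<le> real (N - j) * p"
  shows "pmf (binomial_pmf N p) j \<le> pmf (binomial_pmf N p) (Suc j)"
proof -
  have "pmf (binomial_pmf N p) j * (real (Suc j) * (1 - p))
      \<le> pmf (binomial_pmf N p) j * (real (N - j) * p)"
    using assms(3) by (rule mult_left_mono) simp
  also have "\<dots> = pmf (binomial_pmf N p) (Suc j) * (real (Suc j) * (1 - p))"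
    using assms by (simp only: pmf_binomial_Suc)
  finally show ?thesis
    by (rule mult_right_le_imp_le) (use assms in simp)
qed

lemma pmf_binomial_Suc_le:
  assumes "0 \<le> p" "p < 1" "real (N - j) * p \<le> c * (real (Suc j) * (1 - p))"
  shows "pmf (binomial_pmf N p) (Suc j) \<le> c * pmf (binomial_pmf N p) j"
proof -
  have "pmf (binomial_pmf N p) (Suc j) * (real (Suc j) * (1 - p))
      = pmf (binomial_pmf N p) j * (real (N - j) * p)"
    using assms by (simp only: pmf_binomial_Suc)
  also have "\<dots> \<le> pmf (binomial_pmf N p) j * (c * (real (Suc j) * (1 - p)))"
    using assms(3) by (rule mult_left_mono) simp
  also have "\<dots> = c * pmf (binomial_pmf N p) j * (real (Suc j) * (1 - p))"
    by (simp only: ac_simps)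
  finally show ?thesis
    by (rule mult_right_le_imp_le) (use assms in simp)
qed

lemma pmf_binomial_mono_below:
  assumes "0 \<le> p" "p < 1" "real k \<le> p * real N" "j \<le> k"
  shows "pmf (binomial_pmf N p) j \<le> pmf (binomial_pmf N p) k"
  using assms(4)
proof (induction j rule: inc_induct)
  case (step j)
  have "p * real N \<le> real N"
    using assms by (simp add: mult_left_le_one_le)
  then have "j \<le> N"
    using step.hyps assms(3) by linarith
  then have "real (Suc j) * (1 - p) \<le> real (N - j) * p"
    using step.hyps assms by (simp add: algebra_simps of_nat_diff)
  with step.IH show ?case
    using pmf_binomial_le_Suc assms by (meson order_trans)
qed simp

lemma pmf_binomial_antimono_above:
  assumes "0 \<le> p" "p < 1" "p * real N \<le> real k + 1" "Suc k \<le> j"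
  shows "pmf (binomial_pmf N p) j \<le> pmf (binomial_pmf N p) (Suc k)"
  using assms(4)
proof (induction j rule: dec_induct)
  case (step j)
  have "real (N - j) * p \<le> 1 * (real (Suc j) * (1 - p))"
  proof (cases "j \<le> N")
    case True
    then show ?thesis
      using step.hyps assms by (simp add: algebra_simps of_nat_diff)
  next
    case False
    then show ?thesis
      using assms by simp
  qed
  with step.IH show ?case
    using pmf_binomial_Suc_le[of p N j 1] assms by simp
qed simp

lemma pmf_binomial_ge:
  assumes "0 \<le> p" "p \<le> 1 / 2" "real k \<le> p * real N" "p * real N \<le> real k + 1"
  shows "1 \<le> 2 * (real N + 1) * pmf (binomial_pmf N p) k"
proof -
  let ?B = "binomial_pmf N p"
  have "real (N - k) * p \<le> real N * p"
    using assms by (simp add: mult_right_mono)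
  also have "\<dots> \<le> real (Suc k) * 1"
    using assms by (simp add: mult.commute)
  also have "\<dots> \<le> real (Suc k) * (2 * (1 - p))"
    using assms by (intro mult_left_mono) simp_all
  also have "\<dots> = 2 * (real (Suc k) * (1 - p))"
    by (simp only: ac_simps)
  finally have "pmf ?B (Suc k) \<le> 2 * pmf ?B k"
    by (rule pmf_binomial_Suc_le[rotated 2]) (use assms in simp_all)
  then have le_twice: "pmf ?B j \<le> 2 * pmf ?B k" for j
  proof (cases "j \<le> k")
    case True
    then have "pmf ?B j \<le> pmf ?B k"
      using pmf_binomial_mono_below[of p k N j] assms by (simp del: pmf_binomial)
    then show ?thesis
      using pmf_nonneg[of ?B k] by linarith
  next
    case False
    then show ?thesis
      using pmf_binomial_antimono_above[of p N k j] \<open>pmf ?B (Suc k) \<le> 2 * pmf ?B k\<close> assms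
      by (simp del: pmf_binomial)
  qed
  have "1 = (\<Sum>j\<le>N. pmf ?B j)"
    using assms by (intro sum_pmf_eq_1[symmetric]) (auto simp: set_pmf_binomial_eq)
  also have "\<dots> \<le> (\<Sum>j\<le>N. 2 * pmf ?B k)"
    by (intro sum_mono le_twice)
  also have "\<dots> = 2 * (real N + 1) * pmf ?B k"
    by simp
  finally show ?thesis .
qed

lemma hbin_minus_mult_ln2:
  assumes "0 < p" "p < 1"
  shows "(hbin p - p) * ln 2 = - (p * ln (2 * p) + (1 - p) * ln (1 - p))"
  using assms unfolding hbin_def log_def by (simp add: ln_mult field_simps)

(* The factor (1 - p) / (2 p) absorbs the rounding error p N - k in [0, 1); p <= 1/3 makes it
   at least 1. *)
lemma mult_pow_floor_le_powr_entropy: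
  fixes p :: real and N :: nat
  assumes "0 < p" "p \<le> 1 / 3"
  defines "k \<equiv> nat \<lfloor>p * real N\<rfloor>"
  shows "(2 * p) ^ k * (1 - p) ^ (N - k) \<le> (1 - p) / (2 * p) * 2 powr (- (real N * (hbin p - p)))"
proof -
  define a where "a = ln (2 * p)"
  define b where "b = ln (1 - p)"
  have k: "real k \<le> p * real N" "p * real N < real k + 1"
    unfolding k_def using assms by (simp_all add: of_nat_floor less_nat_floor_add_one)
  have "p * real N \<le> real N"
    using assms by (simp add: mult_left_le_one_le)
  then have "k \<le> N"
    using k by linarith
  have "ln ((2 * p) ^ k * (1 - p) ^ (N - k)) = real k * a + real (N - k) * b"
    using assms(1,2) by (simp add: a_def b_def ln_mult ln_realpow distrib_left)
  also have "\<dots> = real N * (p * a + (1 - p) * b) + (p * real N - real k) * (b - a)"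
    using \<open>k \<le> N\<close> by (simp add: algebra_simps of_nat_diff)
  also have "real N * (p * a + (1 - p) * b) = - (real N * (hbin p - p)) * ln 2"
  proof -
    have "(hbin p - p) * ln 2 = - (p * a + (1 - p) * b)"
      using hbin_minus_mult_ln2[of p] assms(1,2) by (simp add: a_def b_def)
    then show ?thesis
      by (simp only: mult.assoc mult_minus_left mult_minus_right minus_minus)
  qed
  also have "(p * real N - real k) * (b - a) \<le> 1 * ln ((1 - p) / (2 * p))"
  proof (rule mult_mono)
    show "b - a \<le> ln ((1 - p) / (2 * p))" "0 \<le> b - a"
      using assms by (simp_all add: a_def b_def ln_div)
  qed (use k in simp_all)
  also have "- (real N * (hbin p - p)) * ln 2 + 1 * ln ((1 - p) / (2 * p))
      = ln ((1 - p) / (2 * p) * 2 powr (- (real N * (hbin p - p))))"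
  proof -
    have "ln ((1 - p) / (2 * p) * 2 powr (- (real N * (hbin p - p))))
        = ln ((1 - p) / (2 * p)) + ln (2 powr (- (real N * (hbin p - p))))"
      using assms(1,2) by (simp only: ln_mult) simp
    moreover have "ln (2 powr (- (real N * (hbin p - p)))) = - (real N * (hbin p - p)) * ln 2"
      by (simp add: ln_powr)
    ultimately show ?thesis
      by linarith
  qed
  finally show ?thesis
    using assms by (simp add: ln_le_cancel_iff del: ln_mult)
qed

lemma two_pow_div_binomial_le:
  fixes p :: real and N :: nat
  assumes "0 < p" "p \<le> 1 / 3"
  defines "k \<equiv> nat \<lfloor>p * real N\<rfloor>"
  shows "2 ^ k / real (N choose k)
           \<le> 2 * (real N + 1) * ((1 - p) / (2 * p)) * 2 powr (- (real N * (hbin p - p)))"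
proof -
  have "k \<le> N"
    unfolding k_def using assms by (intro nat_floor_mult_le) simp_all
  have "1 \<le> 2 * (real N + 1) * pmf (binomial_pmf N p) k"
    unfolding k_def using assms
    by (intro pmf_binomial_ge) (simp_all add: of_nat_floor less_imp_le less_nat_floor_add_one)
  then have "1 \<le> 2 * (real N + 1) * (p ^ k * (1 - p) ^ (N - k)) * real (N choose k)"
    using assms(1,2) by (simp add: ac_simps)
  moreover have "0 < real (N choose k)"
    using \<open>k \<le> N\<close> by simp
  ultimately have "1 / real (N choose k) \<le> 2 * (real N + 1) * (p ^ k * (1 - p) ^ (N - k))"
    by (simp only: pos_divide_le_eq)
  then have "2 ^ k * (1 / real (N choose k)) \<le> 2 ^ k * (2 * (real N + 1) * (p ^ k * (1 - p) ^ (N - k)))"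
    by (rule mult_left_mono) simp
  then have "2 ^ k / real (N choose k) \<le> 2 * (real N + 1) * ((2 * p) ^ k * (1 - p) ^ (N - k))"
    by (simp add: power_mult_distrib ac_simps)
  also have "\<dots> \<le> 2 * (real N + 1) * ((1 - p) / (2 * p) * 2 powr (- (real N * (hbin p - p))))"
    unfolding k_def using assms by (intro mult_left_mono mult_pow_floor_le_powr_entropy) simp_all
  finally show ?thesis
    by (simp add: ac_simps)
qed

section \<open>The parameters of the theorem\<close>

lemma sqrt_half_bounds: "2 / 3 < sqrt (0.5 :: real)" "sqrt (0.5 :: real) < 4 / 5"
proof -
  show "2 / 3 < sqrt (0.5 :: real)"
    by (rule real_less_rsqrt) (simp add: power2_eq_square)
  have "sqrt (0.5 :: real) < sqrt ((4 / 5) ^ 2)"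
    by (subst real_sqrt_less_iff) (simp add: power2_eq_square)
  then show "sqrt (0.5 :: real) < 4 / 5"
    by simp
qed

lemma p0_bounds: "0 < p0" "p0 \<le> 1 / 3" "(1 - p0) / (2 * p0) \<le> 2"
  using sqrt_half_bounds unfolding p0_def by (simp_all add: field_simps)

lemma hbin_p0_mult_ln2: "hbin p0 * ln 2 = - (p0 * ln p0) + sqrt 0.5 * ln 2 / 2"
proof -
  have "ln (sqrt 0.5) = - ln 2 / (2 :: real)"
    by (simp add: ln_sqrt ln_div)
  then have "hbin p0 = - p0 * (ln p0 / ln 2) + sqrt 0.5 / 2"
    unfolding hbin_def log_def by (simp add: p0_def)
  then show ?thesis
    by (simp add: field_simps)
qed

lemma hbin_p0_bounds: "1 / 2 \<le> hbin p0 - p0" "hbin p0 - p0 \<le> 2"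
proof -
  define s :: real where "s = sqrt 0.5"
  have s: "2 / 3 < s" "s < 4 / 5" "1 - p0 = s"
    unfolding s_def p0_def using sqrt_half_bounds by simp_all
  have "ln p0 \<le> ln (s / 2)"
    using s p0_bounds by simp
  also have "\<dots> = - 3 / 2 * ln 2"
    by (simp add: s_def ln_div ln_sqrt)
  finally have "p0 * ln p0 \<le> p0 * (- 3 / 2 * ln 2)"
    using p0_bounds by (intro mult_left_mono) simp_all
  then have "(3 / 2 * p0 + s / 2) * ln 2 \<le> hbin p0 * ln 2"
    unfolding hbin_p0_mult_ln2 s_def[symmetric] by (simp add: algebra_simps)
  then show "1 / 2 \<le> hbin p0 - p0"
    using s by simp
  have "- ln p0 \<le> 1 / p0 - 1"
    using ln_le_minus_one[of "1 / p0"] p0_bounds by (simp add: ln_div)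
  then have "p0 * (- ln p0) \<le> p0 * (1 / p0 - 1)"
    using p0_bounds by (intro mult_left_mono) simp_all
  then have "- (p0 * ln p0) \<le> s"
    using p0_bounds s by (simp add: field_simps)
  moreover have "s * (1 / 2) \<le> s * ln 2"
    using ln_le_minus_one[of "1 / 2"] s by (intro mult_left_mono) (simp_all add: ln_div)
  ultimately have "hbin p0 * ln 2 \<le> (5 / 2 * s) * ln 2"
    unfolding hbin_p0_mult_ln2 s_def[symmetric] by (simp add: algebra_simps)
  then show "hbin p0 - p0 \<le> 2"
    using s p0_bounds by simp
qed

lemma log_dpar_bounds:
  assumes "2 ^ 16 \<le> real t"
  shows "16 \<le> log 2 (real t)" "4 \<le> dpar t"
proof -
  show "16 \<le> log 2 (real t)"
    using assms by (subst le_log_iff) (simp_all add: powr_realpow)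
  then show "4 \<le> dpar t"
    unfolding dpar_def by (subst le_log_iff) (simp_all add: powr_realpow)
qed

lemma Npar_bounds:
  assumes "2 ^ 16 \<le> real t"
  shows "log 2 (real t) / 2 \<le> real (Npar t)" "real (Npar t) \<le> 4 * log 2 (real t) + 1"
    "(1 + 4 / dpar t) * log 2 (real t) \<le> real (Npar t) * (hbin p0 - p0)"
proof -
  define L where "L = log 2 (real t)"
  define d where "d = dpar t"
  define c where "c = hbin p0 - p0"
  define E where "E = (d + 4) / d * L * (1 / c)"
  have "16 \<le> L" "4 \<le> d"
    using log_dpar_bounds[OF assms] by (simp_all add: L_def d_def)
  have c: "1 / 2 \<le> c" "c \<le> 2"
    unfolding c_def using hbin_p0_bounds by simp_all
  have E_bounds: "L / 2 \<le> E" "E \<le> 4 * L"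
  proof -
    have d: "1 \<le> (d + 4) / d" "(d + 4) / d \<le> 2"
      using \<open>4 \<le> d\<close> by (simp_all add: field_simps)
    have "1 / 2 \<le> 1 / c" "1 / c \<le> 2"
      using c by (simp_all add: field_simps)
    then have L: "L * (1 / 2) \<le> L * (1 / c)" "L * (1 / c) \<le> L * 2"
      using \<open>16 \<le> L\<close> by (simp_all only: mult_left_mono)
    have "E = (d + 4) / d * (L * (1 / c))"
      unfolding E_def by (simp only: mult.assoc)
    moreover have "1 * (L * (1 / 2)) \<le> (d + 4) / d * (L * (1 / c))"
      by (rule mult_mono) (use d L \<open>16 \<le> L\<close> in linarith)+
    moreover have "(d + 4) / d * (L * (1 / c)) \<le> 2 * (L * 2)"
      by (rule mult_mono) (use d L \<open>16 \<le> L\<close> in linarith)+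
    ultimately show "L / 2 \<le> E" "E \<le> 4 * L"
      by simp_all
  qed
  have N: "Npar t = nat \<lceil>E\<rceil>"
    unfolding Npar_def E_def d_def L_def c_def ..
  show "log 2 (real t) / 2 \<le> real (Npar t)" "real (Npar t) \<le> 4 * log 2 (real t) + 1"
    unfolding N L_def[symmetric] using E_bounds \<open>16 \<le> L\<close> by linarith+
  have "(1 + 4 / d) * L = E * c"
    unfolding E_def using \<open>4 \<le> d\<close> c by (simp add: field_simps)
  also have "\<dots> \<le> real (Npar t) * c"
    unfolding N using c by (intro mult_right_mono) linarith+
  finally show "(1 + 4 / dpar t) * log 2 (real t) \<le> real (Npar t) * (hbin p0 - p0)"
    unfolding L_def d_def c_def .
qed

lemma two_pow_div_binomial_Npar_le:
  assumes "2 ^ 16 \<le> real t"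
  defines "N \<equiv> Npar t"
  defines "k \<equiv> nat \<lfloor>p0 * real N\<rfloor>"
  shows "2 ^ k / real (N choose k) \<le> 24 * log 2 (real t) * real t powr (- (1 + 4 / dpar t))"
proof -
  define L where "L = log 2 (real t)"
  define c where "c = hbin p0 - p0"
  have "0 < real t"
    using assms(1) by (smt (verit) zero_less_power)
  have N: "16 \<le> L" "L / 2 \<le> real N" "real N \<le> 4 * L + 1" "(1 + 4 / dpar t) * L \<le> real N * c"
    using log_dpar_bounds[OF assms(1)] Npar_bounds[OF assms(1)] by (simp_all add: N_def L_def c_def)
  have "2 ^ k / real (N choose k) \<le> 2 * (real N + 1) * ((1 - p0) / (2 * p0)) * 2 powr (- (real N * c))"
    unfolding k_def c_def using p0_bounds by (intro two_pow_div_binomial_le) simp_all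
  also have "\<dots> \<le> 2 * (real N + 1) * 2 * 2 powr (- ((1 + 4 / dpar t) * L))"
    using p0_bounds N by (intro mult_mono) simp_all
  also have "2 powr (- ((1 + 4 / dpar t) * L)) = (2 powr L) powr (- (1 + 4 / dpar t))"
    by (simp add: powr_powr algebra_simps)
  also have "2 powr L = real t"
    using \<open>0 < real t\<close> by (simp add: L_def)
  also have "2 * (real N + 1) * 2 \<le> 24 * L"
    using N(1,3) by (simp add: algebra_simps)
  finally show ?thesis
    unfolding L_def by (simp add: mult_right_mono)
qed

lemma exponent_le_minus_one:
  assumes "4 \<le> d" "d \<le> real D" "1 \<le> D"
  shows "real (D + 1) - (1 + 4 / d) * real (D - 1) \<le> - 1"
proof -
  have "real (D + 1) - (1 + 4 / d) * real (D - 1) = 2 - 4 * (real D - 1) / d"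
    using assms by (simp add: of_nat_diff field_simps)
  also have "\<dots> \<le> - 1"
    using assms by (simp add: field_simps)
  finally show ?thesis .
qed

lemma prob_high_degree_rand_matrix:
  assumes "2 ^ 16 \<le> real t"
  shows "measure_pmf.prob (rand_matrix p0 (Npar t) t) {X. \<exists>y. \<exists>v<t. nat \<lceil>dpar t\<rceil> \<le> degH X t y v}
     \<le> (24 * log 2 (real t)) powr dpar t / real t"
proof -
  define N where "N = Npar t"
  define k where "k = nat \<lfloor>p0 * real N\<rfloor>"
  define d where "d = dpar t"
  define D where "D = nat \<lceil>d\<rceil>"
  define G where "G = 24 * log 2 (real t)"
  define a where "a = - (1 + 4 / d)"
  have "1 \<le> real t"
    using assms by (smt (verit) one_le_power)
  have "4 \<le> d" "16 \<le> log 2 (real t)"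
    using log_dpar_bounds[OF assms] by (simp_all add: d_def)
  then have D: "d \<le> real D" "real D < d + 1" "1 \<le> D" and "1 \<le> G"
    by (simp_all add: D_def G_def) linarith+
  have "k \<le> N"
    unfolding k_def using p0_bounds by (intro nat_floor_mult_le) simp_all
  have r: "2 ^ k / real (N choose k) \<le> G * real t powr a"
    using two_pow_div_binomial_Npar_le[OF assms] by (simp add: N_def k_def G_def a_def d_def)
  have "measure_pmf.prob (rand_matrix p0 N t) {X. \<exists>y. \<exists>v<t. D \<le> degH X t y v}
      \<le> real t ^ (D + 1) * (2 ^ k / real (card (ksubsets N k))) ^ (D - 1)"
    unfolding rand_matrix_eq_Pi_pmf k_def[symmetric] using \<open>k \<le> N\<close> \<open>1 \<le> D\<close>
    by (intro prob_high_degree_le) (simp_all add: ksubsets_nonempty mem_ksubsetsD)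
  also have "\<dots> \<le> real t ^ (D + 1) * (G * real t powr a) ^ (D - 1)"
    using r by (intro mult_left_mono power_mono) simp_all
  also have "\<dots> = G powr real (D - 1) * real t powr (real (D + 1) + a * real (D - 1))"
  proof -
    have "real t ^ (D + 1) = real t powr real (D + 1)"
      by (rule powr_realpow[symmetric]) (use \<open>1 \<le> real t\<close> in linarith)
    moreover have "(G * real t powr a) ^ (D - 1) = G powr real (D - 1) * real t powr (a * real (D - 1))"
      using \<open>1 \<le> real t\<close> \<open>1 \<le> G\<close>
      by (simp add: power_mult_distrib powr_realpow[symmetric] powr_powr)
    ultimately show ?thesis
      by (simp add: powr_add)
  qed
  also have "\<dots> \<le> G powr d * real t powr (- 1)"
  proof (rule mult_mono)
    show "G powr real (D - 1) \<le> G powr d"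
      using D \<open>1 \<le> G\<close> by (intro powr_mono) (simp_all add: of_nat_diff)
    have "real (D + 1) + a * real (D - 1) \<le> - 1"
      using exponent_le_minus_one[OF \<open>4 \<le> d\<close> D(1,3)]
      by (simp only: a_def mult_minus_left diff_conv_add_uminus)
    then show "real t powr (real (D + 1) + a * real (D - 1)) \<le> real t powr (- 1)"
      using \<open>1 \<le> real t\<close> by (rule powr_mono)
  qed simp_all
  finally show ?thesis
    using \<open>1 \<le> real t\<close> by (simp add: N_def D_def G_def d_def powr_minus_divide)
qed

lemma not_two_good_subset:
  "{X. \<not> two_good p N t X}
     \<subseteq> {X. \<exists>y. \<exists>v<t. nat \<lceil>log 2 (log 2 (real t))\<rceil> \<le> degH X t y v}
       \<union> {X. \<exists>y M. y \<subseteq> {..<N} \<and> is_matching (edgesH X t y) M \<and>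
                 \<not> real (card M) < 10 * max (real N) (real t ^ 2 * qpar N p (card y))}"
  unfolding two_good_def by (auto simp: nat_ceiling_le_eq not_less)

lemma prob_not_two_good_le:
  assumes "2 ^ 16 \<le> real t"
  shows "measure_pmf.prob (rand_matrix p0 (Npar t) t) {X. \<not> two_good p0 (Npar t) t X}
     \<le> (24 * log 2 (real t)) powr dpar t / real t + 1 / sqrt (real t)"
proof -
  let ?P = "rand_matrix p0 (Npar t) t"
  have N: "16 \<le> log 2 (real t)" "log 2 (real t) / 2 \<le> real (Npar t)"
    using log_dpar_bounds[OF assms] Npar_bounds[OF assms] by simp_all
  have "0 < real t"
    using assms by (smt (verit) zero_less_power)
  have "measure_pmf.prob ?P {X. \<not> two_good p0 (Npar t) t X}
      \<le> measure_pmf.prob ?P {X. \<exists>y. \<exists>v<t. nat \<lceil>dpar t\<rceil> \<le> degH X t y v}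
        + measure_pmf.prob ?P {X. \<exists>y M. y \<subseteq> {..<Npar t} \<and> is_matching (edgesH X t y) M \<and>
            \<not> real (card M) < 10 * max (real (Npar t)) (real t ^ 2 * qpar (Npar t) p0 (card y))}"
    using not_two_good_subset[of p0 "Npar t" t] unfolding dpar_def
    by (intro order_trans[OF measure_pmf.finite_measure_mono measure_Un_le]) auto
  also have "\<dots> \<le> (24 * log 2 (real t)) powr dpar t / real t + (1 / 2) ^ Npar t"
    using prob_high_degree_rand_matrix[OF assms] p0_bounds N
    by (intro add_mono prob_large_matching_le) simp_all
  also have "(1 / 2 :: real) ^ Npar t = 2 powr (- real (Npar t))"
    by (simp add: powr_minus_divide powr_realpow power_one_over)
  also have "\<dots> \<le> 2 powr (- (log 2 (real t) / 2))"
    using N by (intro powr_mono) simp_all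
  also have "2 powr (- (log 2 (real t) / 2)) = 1 / (2 powr log 2 (real t)) powr (1 / 2)"
    by (simp add: powr_minus_divide powr_powr)
  also have "\<dots> = 1 / sqrt (real t)"
    using \<open>0 < real t\<close> by (simp add: powr_half_sqrt)
  finally show ?thesis
    by simp
qed

lemma prob_not_two_good_tendsto_zero:
  "(\<lambda>t. measure_pmf.prob (rand_matrix p0 (Npar t) t) {X. \<not> two_good p0 (Npar t) t X})
     \<longlonglongrightarrow> 0"
proof -
  let ?bad = "\<lambda>t. measure_pmf.prob (rand_matrix p0 (Npar t) t) {X. \<not> two_good p0 (Npar t) t X}"
  define f where "f x = (24 * log 2 x) powr log 2 (log 2 x) / x + 1 / sqrt x" for x :: real
  have "(f \<longlongrightarrow> 0) at_top"
    unfolding f_def by real_asymp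
  then have f_lim: "(\<lambda>t. f (real t)) \<longlonglongrightarrow> 0"
    by (rule filterlim_compose[OF _ filterlim_real_sequentially])
  have bad_le: "\<forall>\<^sub>F t in sequentially. ?bad t \<le> f (real t)"
  proof (rule eventually_sequentiallyI[of "2 ^ 16"])
    fix t :: nat assume "2 ^ 16 \<le> t"
    then have "2 ^ 16 \<le> real t"
      by (metis of_nat_le_iff of_nat_numeral of_nat_power)
    then have "?bad t \<le> (24 * log 2 (real t)) powr dpar t / real t + 1 / sqrt (real t)"
      by (rule prob_not_two_good_le)
    then show "?bad t \<le> f (real t)"
      by (simp add: f_def dpar_def)
  qed
  have bad_ge: "\<forall>\<^sub>F t in sequentially. 0 \<le> ?bad t"
    by (intro always_eventually allI measure_nonneg)
  show ?thesis
    by (rule tendsto_sandwich[OF bad_ge bad_le tendsto_const f_lim])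
qed

lemma prob_Collect_eq_one_minus_prob_not:
  "measure_pmf.prob M {x. P x} = 1 - measure_pmf.prob M {x. \<not> P x}"
proof -
  have "{x. P x} = space (measure_pmf M) - {x. \<not> P x}"
    by auto
  then show ?thesis
    using measure_pmf.prob_compl[where M = M and A = "{x. \<not> P x}"] by simp
qed

theorem lemma1:
  shows "(\<lambda>t. measure_pmf.prob (rand_matrix p0 (Npar t) t) {X. two_good p0 (Npar t) t X})
           \<longlonglongrightarrow> 1"
proof -
  have "(\<lambda>t. 1 - measure_pmf.prob (rand_matrix p0 (Npar t) t) {X. \<not> two_good p0 (Npar t) t X})
      \<longlonglongrightarrow> 1 - 0"
    using prob_not_two_good_tendsto_zero by (intro tendsto_diff tendsto_const)
  then show ?thesis
    by (simp flip: prob_Collect_eq_one_minus_prob_not)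
qed

end
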